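(* For every modal proposition $A$, if $\mathsf{LC}\vdash A$ then $\mathsf{iGL}\vdash A^\Box$.
   Context: Modal language: propositional variables, $\bot$, $\wedge,\vee,\to$, $\Box$; atomic = variables and $\bot$. $\mathsf{iGL}$: intuitionistic propositional logic in the modal language plus $\Box(A\to B)\to(\Box A\to\Box B)$, $\Box A\to\Box\Box A$, $\Box(\Box A\to A)\to\Box A$, closed under modus ponens and necessitation. $\mathsf{LC}:=\mathsf{iGL}+\{A\to\Box A\}$. Box-translation: $A^\Box:=A\wedge\Box A$ for atomic $A$; $(A\circ B)^\Box:=A^\Box\circ B^\Box$ for $\circ\in\{\wedge,\vee\}$; $(A\to B)^\Box:=(A^\Box\to B^\Box)\wedge\Box(A^\Box\to B^\Box)$; $(\Box A)^\Box:=\Box(A^\Box)$. *)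

theory Defs
  imports Main
begin

datatype form =
    Var nat
  | Bot
  | And form form
  | Or form form
  | Imp form form
  | Box form

inductive ipc_axiom :: "form \<Rightarrow> bool" where
  ax_K: "ipc_axiom (Imp A (Imp B A))"
| ax_S: "ipc_axiom (Imp (Imp A (Imp B C)) (Imp (Imp A B) (Imp A C)))"
| ax_conjE1: "ipc_axiom (Imp (And A B) A)"
| ax_conjE2: "ipc_axiom (Imp (And A B) B)"
| ax_conjI: "ipc_axiom (Imp A (Imp B (And A B)))"
| ax_disjI1: "ipc_axiom (Imp A (Or A B))"
| ax_disjI2: "ipc_axiom (Imp B (Or A B))"
| ax_disjE: "ipc_axiom (Imp (Imp A C) (Imp (Imp B C) (Imp (Or A B) C)))"
| ax_efq: "ipc_axiom (Imp Bot A)"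

inductive iGL :: "form \<Rightarrow> bool" where
  iGL_ipc: "ipc_axiom A \<Longrightarrow> iGL A"
| iGL_K: "iGL (Imp (Box (Imp A B)) (Imp (Box A) (Box B)))"
| iGL_4: "iGL (Imp (Box A) (Box (Box A)))"
| iGL_L: "iGL (Imp (Box (Imp (Box A) A)) (Box A))"
| iGL_mp: "iGL (Imp A B) \<Longrightarrow> iGL A \<Longrightarrow> iGL B"
| iGL_nec: "iGL A \<Longrightarrow> iGL (Box A)"

inductive LC :: "form \<Rightarrow> bool" where
  LC_ipc: "ipc_axiom A \<Longrightarrow> LC A"
| LC_K: "LC (Imp (Box (Imp A B)) (Imp (Box A) (Box B)))"
| LC_4: "LC (Imp (Box A) (Box (Box A)))"
| LC_L: "LC (Imp (Box (Imp (Box A) A)) (Box A))"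
| LC_cp: "LC (Imp A (Box A))"
| LC_mp: "LC (Imp A B) \<Longrightarrow> LC A \<Longrightarrow> LC B"
| LC_nec: "LC A \<Longrightarrow> LC (Box A)"

fun boxtr :: "form \<Rightarrow> form" where
  "boxtr (Var p) = And (Var p) (Box (Var p))"
| "boxtr Bot = And Bot (Box Bot)"
| "boxtr (And A B) = And (boxtr A) (boxtr B)"
| "boxtr (Or A B) = Or (boxtr A) (boxtr B)"
| "boxtr (Imp A B) = And (Imp (boxtr A) (boxtr B)) (Box (Imp (boxtr A) (boxtr B)))"
| "boxtr (Box A) = Box (boxtr A)"

end

theory Submission
  imports Defs
begin

text \<open>Write \<open>X \<prec> Y\<close> for the strict implication \<open>(X \<rightarrow> Y) \<and> \<box>(X \<rightarrow> Y)\<close>, so that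
  \<open>(A \<rightarrow> B)\<^sup>\<box> = A\<^sup>\<box> \<prec> B\<^sup>\<box>\<close>. Call \<open>G\<close> persistent if \<open>\<turnstile> G \<rightarrow> \<box>G\<close> in iGL.
  Every translated formula is persistent, since atoms are translated to \<open>p \<and> \<box>p\<close>
  and the remaining connectives preserve persistence (using axiom 4 for \<open>\<box>\<close>).
  Over a persistent context \<open>G\<close>, strict implication satisfies the deduction theorem:
  from \<open>\<turnstile> G \<and> X \<rightarrow> Y\<close> we get \<open>\<turnstile> G \<rightarrow> (X \<rightarrow> Y)\<close>, then
  \<open>\<turnstile> \<box>G \<rightarrow> \<box>(X \<rightarrow> Y)\<close>, and with \<open>G \<rightarrow> \<box>G\<close> finally \<open>\<turnstile> G \<rightarrow> X \<prec> Y\<close>. So the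
  translations of the IPC axioms are derivable as in IPC itself; K and L translate
  to consequences of their own instances by monotonicity of \<open>\<box>\<close>, 4 to an instance of
  itself, and the completeness principle \<open>A \<rightarrow> \<box>A\<close> to persistence of \<open>A\<^sup>\<box>\<close>.
  Modus ponens and necessitation commute with the translation.\<close>

lemma iGL_imp_weaken: "iGL Y \<Longrightarrow> iGL (Imp X Y)"
  by (meson iGL_mp iGL_ipc ipc_axiom.ax_K)

lemma iGL_imp_S: "iGL (Imp X (Imp Y Z)) \<Longrightarrow> iGL (Imp X Y) \<Longrightarrow> iGL (Imp X Z)"
  by (meson iGL_mp iGL_ipc ipc_axiom.ax_S)

lemma iGL_imp_refl: "iGL (Imp X X)"
  by (meson iGL_imp_S iGL_ipc ipc_axiom.ax_K)

lemma iGL_imp_trans: "iGL (Imp X Y) \<Longrightarrow> iGL (Imp Y Z) \<Longrightarrow> iGL (Imp X Z)"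
  by (meson iGL_imp_S iGL_imp_weaken)

lemma iGL_conjE1: "iGL (Imp (And X Y) X)"
  by (intro iGL_ipc ipc_axiom.ax_conjE1)

lemma iGL_conjE2: "iGL (Imp (And X Y) Y)"
  by (intro iGL_ipc ipc_axiom.ax_conjE2)

lemma iGL_conjI: "iGL X \<Longrightarrow> iGL Y \<Longrightarrow> iGL (And X Y)"
  by (meson iGL_mp iGL_ipc ipc_axiom.ax_conjI)

lemma iGL_imp_conjI: "iGL (Imp X Y) \<Longrightarrow> iGL (Imp X Z) \<Longrightarrow> iGL (Imp X (And Y Z))"
  by (meson iGL_imp_S iGL_imp_trans iGL_ipc ipc_axiom.ax_conjI)

lemma iGL_imp_conj_swap: "iGL (Imp (And X Y) (And Y X))"
  by (meson iGL_imp_conjI iGL_conjE1 iGL_conjE2)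

lemma iGL_curry:
  assumes "iGL (Imp (And X Y) Z)"
  shows "iGL (Imp X (Imp Y Z))"
proof -
  have "iGL (Imp Y (Imp (And X Y) Z))"
    using assms by (rule iGL_imp_weaken)
  then have "iGL (Imp (Imp Y (And X Y)) (Imp Y Z))"
    by (meson iGL_mp iGL_ipc ipc_axiom.ax_S)
  moreover have "iGL (Imp X (Imp Y (And X Y)))"
    by (intro iGL_ipc ipc_axiom.ax_conjI)
  ultimately show ?thesis
    by (meson iGL_imp_trans)
qed

lemma iGL_uncurry: "iGL (Imp X (Imp Y Z)) \<Longrightarrow> iGL (Imp (And X Y) Z)"
  by (meson iGL_imp_S iGL_imp_trans iGL_conjE1 iGL_conjE2)

lemma iGL_imp_disjE: "iGL (Imp X Z) \<Longrightarrow> iGL (Imp Y Z) \<Longrightarrow> iGL (Imp (Or X Y) Z)"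
  by (meson iGL_mp iGL_ipc ipc_axiom.ax_disjE)

lemma iGL_imp_disjE_context:
  assumes "iGL (Imp (And G X) Z)" and "iGL (Imp (And G Y) Z)"
  shows "iGL (Imp (And G (Or X Y)) Z)"
proof -
  have "iGL (Imp X (Imp G Z))" and "iGL (Imp Y (Imp G Z))"
    using assms by (meson iGL_curry iGL_imp_trans iGL_imp_conj_swap)+
  then have "iGL (Imp (And (Or X Y) G) Z)"
    by (intro iGL_uncurry iGL_imp_disjE)
  then show ?thesis
    using iGL_imp_trans iGL_imp_conj_swap by blast
qed

lemma iGL_box_mono: "iGL (Imp X Y) \<Longrightarrow> iGL (Imp (Box X) (Box Y))"
  by (meson iGL_mp iGL_nec iGL_K)

lemma iGL_box_conj: "iGL (Imp (And (Box X) (Box Y)) (Box (And X Y)))"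
proof -
  have "iGL (Imp (Box X) (Box (Imp Y (And X Y))))"
    by (intro iGL_box_mono iGL_ipc ipc_axiom.ax_conjI)
  then show ?thesis
    using iGL_K iGL_imp_trans iGL_uncurry by blast
qed

abbreviation strict_imp :: "form \<Rightarrow> form \<Rightarrow> form" where
  "strict_imp X Y \<equiv> And (Imp X Y) (Box (Imp X Y))"

lemma iGL_strict_imp_of_imp: "iGL (Imp X Y) \<Longrightarrow> iGL (strict_imp X Y)"
  by (simp add: iGL_conjI iGL_nec)

lemma iGL_strict_imp_mp: "iGL (Imp (And (strict_imp X Y) X) Y)"
  by (meson iGL_uncurry iGL_conjE1)

definition persistent :: "form \<Rightarrow> bool" where
  "persistent G \<longleftrightarrow> iGL (Imp G (Box G))"

lemma persistent_And: "persistent G \<Longrightarrow> persistent H \<Longrightarrow> persistent (And G H)"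
  unfolding persistent_def
  by (meson iGL_imp_trans iGL_imp_conjI iGL_conjE1 iGL_conjE2 iGL_box_conj)

lemma persistent_Box: "persistent (Box X)"
  unfolding persistent_def by (rule iGL_4)

lemma persistent_strict_imp: "persistent (strict_imp X Y)"
proof -
  have "iGL (Imp (strict_imp X Y) (Box (Box (Imp X Y))))"
    using iGL_conjE2 iGL_4 iGL_imp_trans by blast
  then have "iGL (Imp (strict_imp X Y) (And (Box (Imp X Y)) (Box (Box (Imp X Y)))))"
    using iGL_conjE2 iGL_imp_conjI by blast
  then show ?thesis
    unfolding persistent_def using iGL_box_conj iGL_imp_trans by blast
qed

lemma persistent_boxtr: "persistent (boxtr A)"
proof (induction A)
  case (Var p)
  have "iGL (Imp (And (Var p) (Box (Var p))) (And (Box (Var p)) (Box (Box (Var p)))))"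
    by (meson iGL_conjE2 iGL_4 iGL_imp_trans iGL_imp_conjI)
  then show ?case
    unfolding persistent_def using iGL_box_conj iGL_imp_trans by auto
next
  case Bot
  show ?case
    unfolding persistent_def by (simp, meson iGL_imp_trans iGL_conjE1 iGL_ipc ipc_axiom.ax_efq)
next
  case (And A B)
  then show ?case by (simp add: persistent_And)
next
  case (Or A B)
  then show ?case
    unfolding persistent_def
    by (simp, meson iGL_imp_disjE iGL_imp_trans iGL_box_mono
        iGL_ipc ipc_axiom.ax_disjI1 ipc_axiom.ax_disjI2)
next
  case (Imp A B)
  show ?case by (simp add: persistent_strict_imp)
next
  case (Box A)
  show ?case by (simp add: persistent_Box)
qed

lemma strict_imp_intro:
  assumes "persistent G" and "iGL (Imp (And G X) Y)"
  shows "iGL (Imp G (strict_imp X Y))"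
proof -
  have "iGL (Imp G (Imp X Y))"
    using assms(2) by (rule iGL_curry)
  moreover have "iGL (Imp G (Box (Imp X Y)))"
    using assms(1) \<open>iGL (Imp G (Imp X Y))\<close> unfolding persistent_def
    by (meson iGL_box_mono iGL_imp_trans)
  ultimately show ?thesis
    by (rule iGL_imp_conjI)
qed

lemma strict_imp_intro2:
  assumes "persistent G" and "persistent H" and "iGL (Imp (And (And G H) X) Y)"
  shows "iGL (strict_imp G (strict_imp H (strict_imp X Y)))"
proof -
  have "iGL (Imp (And G H) (strict_imp X Y))"
    using persistent_And[OF assms(1,2)] assms(3) by (rule strict_imp_intro)
  with assms(1) have "iGL (Imp G (strict_imp H (strict_imp X Y)))"
    by (rule strict_imp_intro)
  then show ?thesis
    by (rule iGL_strict_imp_of_imp)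
qed

lemma iGL_boxtr_ipc_axiom:
  assumes "ipc_axiom A"
  shows "iGL (boxtr A)"
  using assms
proof (cases rule: ipc_axiom.cases)
  case (ax_K A B)
  have "iGL (Imp (boxtr A) (strict_imp (boxtr B) (boxtr A)))"
    using persistent_boxtr strict_imp_intro iGL_conjE1 by blast
  then show ?thesis
    using ax_K iGL_strict_imp_of_imp by simp
next
  case (ax_S A B C)
  let ?a = "boxtr A" and ?b = "boxtr B" and ?c = "boxtr C"
  let ?G = "strict_imp ?a (strict_imp ?b ?c)" and ?H = "strict_imp ?a ?b"
  have "iGL (Imp (And (And ?G ?H) ?a) (strict_imp ?b ?c))"
    and "iGL (Imp (And (And ?G ?H) ?a) ?b)"
    by (meson iGL_imp_trans iGL_imp_conjI iGL_conjE1 iGL_conjE2 iGL_strict_imp_mp)+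
  then have "iGL (Imp (And (And ?G ?H) ?a) ?c)"
    using iGL_imp_conjI iGL_strict_imp_mp iGL_imp_trans by blast
  then show ?thesis
    using ax_S by (simp add: strict_imp_intro2 persistent_strict_imp)
next
  case (ax_conjE1 A B)
  then show ?thesis using iGL_strict_imp_of_imp iGL_conjE1 by simp
next
  case (ax_conjE2 A B)
  then show ?thesis using iGL_strict_imp_of_imp iGL_conjE2 by simp
next
  case (ax_conjI A B)
  have "iGL (Imp (boxtr A) (strict_imp (boxtr B) (And (boxtr A) (boxtr B))))"
    using persistent_boxtr strict_imp_intro iGL_imp_refl by blast
  then show ?thesis
    using ax_conjI iGL_strict_imp_of_imp by simp
next
  case (ax_disjI1 A B)
  then show ?thesis
    using iGL_strict_imp_of_imp iGL_ipc ipc_axiom.ax_disjI1 by simp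
next
  case (ax_disjI2 A B)
  then show ?thesis
    using iGL_strict_imp_of_imp iGL_ipc ipc_axiom.ax_disjI2 by simp
next
  case (ax_disjE A C B)
  let ?a = "boxtr A" and ?b = "boxtr B" and ?c = "boxtr C"
  let ?G = "strict_imp ?a ?c" and ?H = "strict_imp ?b ?c"
  have "iGL (Imp (And (And ?G ?H) ?a) ?c)" and "iGL (Imp (And (And ?G ?H) ?b) ?c)"
    by (meson iGL_imp_trans iGL_imp_conjI iGL_conjE1 iGL_conjE2 iGL_strict_imp_mp)+
  then have "iGL (Imp (And (And ?G ?H) (Or ?a ?b)) ?c)"
    by (rule iGL_imp_disjE_context)
  then show ?thesis
    using ax_disjE by (simp add: strict_imp_intro2 persistent_strict_imp)
next
  case (ax_efq A)
  then show ?thesis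
    using iGL_strict_imp_of_imp by (simp, meson iGL_imp_trans iGL_conjE1 iGL_ipc ipc_axiom.ax_efq)
qed

theorem lemma4p22:
  fixes A :: form
  assumes "LC A"
  shows "iGL (boxtr A)"
  using assms
proof (induction rule: LC.induct)
  case (LC_ipc A)
  then show ?case by (rule iGL_boxtr_ipc_axiom)
next
  case (LC_K A B)
  have "iGL (Imp (And (Box (boxtr (Imp A B))) (Box (boxtr A))) (Box (boxtr B)))"
    by (simp, meson iGL_box_mono iGL_conjE1 iGL_K iGL_imp_trans iGL_uncurry)
  then show ?case
    using persistent_Box strict_imp_intro iGL_strict_imp_of_imp by simp
next
  case (LC_4 A)
  show ?case using iGL_strict_imp_of_imp iGL_4 by simp
next
  case (LC_L A)
  show ?case
    using iGL_strict_imp_of_imp by (simp, meson iGL_box_mono iGL_conjE1 iGL_L iGL_imp_trans)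
next
  case (LC_cp A)
  show ?case using iGL_strict_imp_of_imp persistent_boxtr unfolding persistent_def by simp
next
  case (LC_mp A B)
  then show ?case using iGL_mp iGL_conjE1 by (simp, blast)
next
  case (LC_nec A)
  then show ?case by (simp add: iGL_nec)
qed

end
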